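(* Let $T$ be a finite tree and let $P=p_0p_1\dots p_k$ ($k\ge1$) be a path in $T$ such that each of $p_1,\dots,p_{k-1}$ has degree $2$ in $T$. Let $B$ be the vertex set of the component containing $p_k$ of the graph obtained from $T$ by deleting the edges of $P$. Let $T'$ be the tree obtained from $T$ by deleting all edges between $p_k$ and $\Gamma(p_k)\setminus\{p_{k-1}\}$ and adding the edges between $p_0$ and $\Gamma(p_k)\setminus\{p_{k-1}\}$ instead. Then for every $\ell\ge1$, \[\omega_{\ell}(p_0,T[B\cup P])-\omega_{\ell}(p_0,P)\leq \omega_{\ell}(p_0,T'[B\cup P])-\omega_{\ell}(p_0,P).\]
   Context: $\Gamma(v)$ is the set of neighbours of $v$ in $T$. For a graph $G$ containing the vertices of $B$ and $P$, $G[B\cup P]$ is the subgraph of $G$ induced by $B\cup\{p_0,\dots,p_k\}$. For a graph $G$, a vertex $x$ and $\ell\ge1$, $\omega_\ell(x,G)$ is the number of walks of length $\ell$ in $G$ starting at $x$. $P$ is regarded as a graph (the path). *)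

theory Defs
  imports Main
begin

type_synonym 'a graph = "'a set \<times> 'a set set"

definition wf_graph :: "'a graph \<Rightarrow> bool" where
  "wf_graph G \<longleftrightarrow> (\<forall>e\<in>snd G. \<exists>u v. u \<noteq> v \<and> e = {u, v} \<and> u \<in> fst G \<and> v \<in> fst G)"

definition nbrs :: "'a graph \<Rightarrow> 'a \<Rightarrow> 'a set" where
  "nbrs G v = {u \<in> fst G. {v, u} \<in> snd G}"

definition is_walk :: "'a graph \<Rightarrow> 'a list \<Rightarrow> bool" where
  "is_walk G ws \<longleftrightarrow> ws \<noteq> [] \<and> set ws \<subseteq> fst G \<and>
     (\<forall>i. Suc i < length ws \<longrightarrow> {ws ! i, ws ! Suc i} \<in> snd G)"

definition reachable :: "'a graph \<Rightarrow> 'a \<Rightarrow> 'a \<Rightarrow> bool" where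
  "reachable G u v \<longleftrightarrow> (\<exists>ws. is_walk G ws \<and> hd ws = u \<and> last ws = v)"

definition connected_graph :: "'a graph \<Rightarrow> bool" where
  "connected_graph G \<longleftrightarrow> (\<forall>u\<in>fst G. \<forall>v\<in>fst G. reachable G u v)"

definition has_cycle :: "'a graph \<Rightarrow> bool" where
  "has_cycle G \<longleftrightarrow> (\<exists>cs. length cs \<ge> 3 \<and> distinct cs \<and> is_walk G cs \<and> {last cs, hd cs} \<in> snd G)"

definition is_tree :: "'a graph \<Rightarrow> bool" where
  "is_tree G \<longleftrightarrow> finite (fst G) \<and> fst G \<noteq> {} \<and> wf_graph G \<and> connected_graph G \<and> \<not> has_cycle G"

definition induced :: "'a graph \<Rightarrow> 'a set \<Rightarrow> 'a graph" where
  "induced G S = (S \<inter> fst G, {e \<in> snd G. e \<subseteq> S})"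

text \<open>omega_l(x, G): number of walks of length l (l edges) starting at x.\<close>
definition walk_count :: "nat \<Rightarrow> 'a \<Rightarrow> 'a graph \<Rightarrow> nat" where
  "walk_count l x G = card {ws. is_walk G ws \<and> length ws = Suc l \<and> hd ws = x}"

definition path_verts :: "(nat \<Rightarrow> 'a) \<Rightarrow> nat \<Rightarrow> 'a set" where
  "path_verts p k = p ` {0..k}"

definition path_edges :: "(nat \<Rightarrow> 'a) \<Rightarrow> nat \<Rightarrow> 'a set set" where
  "path_edges p k = (\<lambda>i. {p i, p (Suc i)}) ` {0..<k}"

definition path_graph :: "(nat \<Rightarrow> 'a) \<Rightarrow> nat \<Rightarrow> 'a graph" where
  "path_graph p k = (path_verts p k, path_edges p k)"

definition comp_B :: "'a graph \<Rightarrow> (nat \<Rightarrow> 'a) \<Rightarrow> nat \<Rightarrow> 'a set" where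
  "comp_B T p k = {v. reachable (fst T, snd T - path_edges p k) (p k) v}"

definition moved_tree :: "'a graph \<Rightarrow> (nat \<Rightarrow> 'a) \<Rightarrow> nat \<Rightarrow> 'a graph" where
  "moved_tree T p k =
     (let N = nbrs T (p k) - {p (k - 1)} in
      (fst T, (snd T - (\<lambda>u. {p k, u}) ` N) \<union> (\<lambda>u. {p 0, u}) ` N))"

end

theory Submission
  imports Defs
begin

text \<open>In G = T[B \<union> P] the vertex p_0 is a leaf and p_1, ..., p_(k-1) have degree 2.
Comparing a vertex of the path with its mirror image about the midpoint, induction on the length
of walks gives omega_l(p_0, G) \<le> omega_l(p_k, G); for odd k the path is first prolonged by a
neighbour u of p_k other than p_(k-1), and if there is no such u then T' = T.  The map reversing
the path and fixing the rest of B is an injective homomorphism from G into T'[B \<union> P] sending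
p_k to p_0, so omega_l(p_k, G) \<le> omega_l(p_0, T'[B \<union> P]).\<close>

lemma is_walk_singleton [simp]: "is_walk G [x] \<longleftrightarrow> x \<in> fst G"
  by (auto simp: is_walk_def)

lemma is_walk_Cons_Cons [simp]:
  "is_walk G (x # y # ys) \<longleftrightarrow> x \<in> fst G \<and> {x, y} \<in> snd G \<and> is_walk G (y # ys)"
  unfolding is_walk_def
proof safe
  fix i assume "\<forall>i. Suc i < length (x # y # ys) \<longrightarrow> {(x # y # ys) ! i, (x # y # ys) ! Suc i} \<in> snd G"
    and "Suc i < length (y # ys)"
  then show "{(y # ys) ! i, (y # ys) ! Suc i} \<in> snd G" by (metis Suc_less_eq length_Cons nth_Cons_Suc)
next
  fix i assume "\<forall>i. Suc i < length (y # ys) \<longrightarrow> {(y # ys) ! i, (y # ys) ! Suc i} \<in> snd G"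
    and "{x, y} \<in> snd G" and "Suc i < length (x # y # ys)"
  then show "{(x # y # ys) ! i, (x # y # ys) ! Suc i} \<in> snd G" by (cases i) auto
qed (force+)

lemma is_walk_ConsD: "is_walk G (x # xs) \<Longrightarrow> x \<in> fst G"
  by (simp add: is_walk_def)

lemma is_walk_nonempty: "is_walk G ws \<Longrightarrow> ws \<noteq> []"
  by (simp add: is_walk_def)

lemma is_walk_set: "is_walk G ws \<Longrightarrow> set ws \<subseteq> fst G"
  by (simp add: is_walk_def)

lemma is_walk_append_Cons:
  "is_walk G (xs @ x # ys) \<longleftrightarrow> is_walk G (xs @ [x]) \<and> is_walk G (x # ys)"
proof (induction xs)
  case Nil
  then show ?case by (auto dest: is_walk_ConsD)
next
  case (Cons a xs)
  then show ?case by (cases xs) (auto dest: is_walk_ConsD)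
qed

lemma is_walk_mono:
  "is_walk G ws \<Longrightarrow> fst G \<subseteq> fst G' \<Longrightarrow> snd G \<subseteq> snd G' \<Longrightarrow> is_walk G' ws"
  by (auto simp: is_walk_def)

lemma is_walk_map_upt:
  assumes "\<And>i. i \<le> n \<Longrightarrow> q i \<in> fst G" and "\<And>i. i < n \<Longrightarrow> {q i, q (Suc i)} \<in> snd G"
  shows "is_walk G (map q [0..<Suc n])"
  using assms unfolding is_walk_def by (auto simp del: upt_Suc)

lemma is_walk_length_ge_2: "is_walk G ws \<Longrightarrow> hd ws \<noteq> last ws \<Longrightarrow> 2 \<le> length ws"
  by (cases ws) (auto simp: is_walk_def Suc_le_eq split: if_splits)

lemma is_walk_distinct:
  "is_walk G ws \<Longrightarrow> \<exists>ds. is_walk G ds \<and> distinct ds \<and> hd ds = hd ws \<and> last ds = last ws"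
proof (induction "length ws" arbitrary: ws rule: less_induct)
  case less
  show ?case
  proof (cases "distinct ws")
    case True
    with less.prems show ?thesis by blast
  next
    case False
    then obtain xs x ys zs where "ws = xs @ [x] @ ys @ [x] @ zs"
      using not_distinct_decomp by blast
    then have ws: "ws = (xs @ x # ys) @ x # zs" by simp
    have "is_walk G ((xs @ x # ys) @ [x])" "is_walk G (x # zs)"
      using less.prems is_walk_append_Cons[of G "xs @ x # ys" x zs] unfolding ws by blast+
    then have "is_walk G (xs @ [x])" "is_walk G (x # zs)"
      using is_walk_append_Cons[of G xs x "ys @ [x]"] by auto
    then have walk: "is_walk G (xs @ x # zs)" using is_walk_append_Cons[of G xs x zs] by blast
    have "length (xs @ x # zs) < length ws" unfolding ws by simp
    from less.hyps[OF this walk] obtain ds where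
      "is_walk G ds" "distinct ds" "hd ds = hd (xs @ x # zs)" "last ds = last (xs @ x # zs)"
      by blast
    moreover have "hd (xs @ x # zs) = hd ws" "last (xs @ x # zs) = last ws"
      unfolding ws by (simp_all add: hd_append)
    ultimately show ?thesis by metis
  qed
qed

lemma is_walk_incident:
  assumes "is_walk G ws" "2 \<le> length ws" "z \<in> set ws"
  shows "\<exists>w. {z, w} \<in> snd G"
proof -
  obtain xs ys where ws: "ws = xs @ z # ys" using assms(3) by (meson split_list)
  show ?thesis
  proof (cases ys)
    case (Cons y ys')
    then show ?thesis using assms(1) is_walk_append_Cons[of G xs z ys] ws by auto
  next
    case Nil
    then obtain as w where "xs = as @ [w]" using assms(2) ws by (cases xs rule: rev_cases) auto
    then have "is_walk G [w, z]" using assms(1) is_walk_append_Cons[of G as w "[z]"] ws Nil by simp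
    then show ?thesis by (auto simp: insert_commute)
  qed
qed

lemma is_walk_map:
  assumes "is_walk G ws"
    and "\<And>v. v \<in> fst G \<Longrightarrow> f v \<in> fst G'"
    and "\<And>x y. x \<in> fst G \<Longrightarrow> y \<in> fst G \<Longrightarrow> {x, y} \<in> snd G \<Longrightarrow> {f x, f y} \<in> snd G'"
  shows "is_walk G' (map f ws)"
  using assms
proof (induction ws rule: induct_list012)
  case (3 x y zs)
  then show ?case by (auto dest: is_walk_ConsD)
qed (auto dest: is_walk_nonempty)

lemma finite_walks: "finite (fst G) \<Longrightarrow> finite {ws. is_walk G ws \<and> length ws = n \<and> P ws}"
  by (rule finite_subset[OF _ finite_lists_length_eq[of "fst G" n]]) (auto simp: is_walk_def)

lemma finite_nbrs: "finite (fst G) \<Longrightarrow> finite (nbrs G v)"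
  by (rule finite_subset[rotated]) (auto simp: nbrs_def)

lemma walk_count_0: "x \<in> fst G \<Longrightarrow> walk_count 0 x G = 1"
proof -
  assume "x \<in> fst G"
  then have "{ws. is_walk G ws \<and> length ws = Suc 0 \<and> hd ws = x} = {[x]}"
    by (auto simp: length_Suc_conv)
  then show ?thesis by (simp add: walk_count_def)
qed

lemma walk_count_outside: "x \<notin> fst G \<Longrightarrow> walk_count l x G = 0"
proof -
  assume x: "x \<notin> fst G"
  have "hd ws \<in> fst G" if "is_walk G ws" for ws
    using that is_walk_nonempty is_walk_set by (metis hd_in_set subsetD)
  with x have "{ws. is_walk G ws \<and> length ws = Suc l \<and> hd ws = x} = {}" by blast
  then show ?thesis unfolding walk_count_def by (simp only: card.empty)
qed

lemma walk_count_Suc: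
  assumes fin: "finite (fst G)" and x: "x \<in> fst G"
  shows "walk_count (Suc l) x G = (\<Sum>y\<in>nbrs G x. walk_count l y G)"
proof -
  let ?W = "\<lambda>y. {ws. is_walk G ws \<and> length ws = Suc l \<and> hd ws = y}"
  have "{ws. is_walk G ws \<and> length ws = Suc (Suc l) \<and> hd ws = x} = (\<Union>y\<in>nbrs G x. (Cons x) ` ?W y)"
  proof (rule set_eqI, rule iffI)
    fix ws assume "ws \<in> {ws. is_walk G ws \<and> length ws = Suc (Suc l) \<and> hd ws = x}"
    then obtain y ys where "ws = x # y # ys" "is_walk G ws" "length ys = l"
      by (auto simp: length_Suc_conv)
    then show "ws \<in> (\<Union>y\<in>nbrs G x. (Cons x) ` ?W y)"
      by (auto simp: nbrs_def dest: is_walk_ConsD)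
  next
    fix ws assume "ws \<in> (\<Union>y\<in>nbrs G x. (Cons x) ` ?W y)"
    then obtain y zs where y: "y \<in> nbrs G x" and zs: "zs \<in> ?W y" and ws: "ws = x # zs" by blast
    obtain ys where "zs = y # ys" using zs by (cases zs) (auto simp: is_walk_def)
    then show "ws \<in> {ws. is_walk G ws \<and> length ws = Suc (Suc l) \<and> hd ws = x}"
      using y zs ws x by (auto simp: nbrs_def)
  qed
  also have "card \<dots> = (\<Sum>y\<in>nbrs G x. card ((Cons x) ` ?W y))"
    by (rule card_UN_disjoint[OF finite_nbrs[OF fin]]) (auto intro: finite_walks[OF fin])
  also have "\<dots> = (\<Sum>y\<in>nbrs G x. card (?W y))"
    by (rule sum.cong) (auto intro: card_image inj_onI)
  finally show ?thesis by (simp add: walk_count_def)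
qed

lemma walk_count_le_Suc:
  assumes fin: "finite (fst G)" and no_isolated: "\<And>v. v \<in> fst G \<Longrightarrow> nbrs G v \<noteq> {}"
  shows "walk_count l v G \<le> walk_count (Suc l) v G"
proof (induction l arbitrary: v)
  case 0
  show ?case
  proof (cases "v \<in> fst G")
    case True
    have "walk_count (Suc 0) v G = card (nbrs G v)"
      using walk_count_Suc[OF fin True] by (simp add: walk_count_0 nbrs_def)
    then show ?thesis
      using no_isolated[OF True] finite_nbrs[OF fin] walk_count_0[OF True]
      by (simp add: Suc_le_eq card_gt_0_iff)
  qed (simp add: walk_count_outside)
next
  case (Suc l)
  show ?case
  proof (cases "v \<in> fst G")
    case True
    show ?thesis unfolding walk_count_Suc[OF fin True] by (rule sum_mono) (rule Suc.IH)
  qed (simp add: walk_count_outside)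
qed

lemma walk_count_le_inj_hom:
  assumes fin: "finite (fst G')"
    and inj: "inj_on f (fst G)"
    and vertex: "\<And>v. v \<in> fst G \<Longrightarrow> f v \<in> fst G'"
    and edge: "\<And>x y. x \<in> fst G \<Longrightarrow> y \<in> fst G \<Longrightarrow> {x, y} \<in> snd G \<Longrightarrow> {f x, f y} \<in> snd G'"
  shows "walk_count l v G \<le> walk_count l (f v) G'"
proof -
  let ?A = "{ws. is_walk G ws \<and> length ws = Suc l \<and> hd ws = v}"
  let ?B = "{ws. is_walk G' ws \<and> length ws = Suc l \<and> hd ws = f v}"
  have "map f ` ?A \<subseteq> ?B"
  proof
    fix zs assume "zs \<in> map f ` ?A"
    then obtain ws where ws: "ws \<in> ?A" "zs = map f ws" by blast
    then have "is_walk G' zs" using is_walk_map[of G ws f G'] vertex edge by blast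
    with ws show "zs \<in> ?B" by (auto simp: hd_map dest: is_walk_nonempty)
  qed
  moreover have "inj_on (map f) ?A"
  proof (rule inj_onI)
    fix xs ys assume "xs \<in> ?A" "ys \<in> ?A" "map f xs = map f ys"
    moreover have "set xs \<union> set ys \<subseteq> fst G"
      using \<open>xs \<in> ?A\<close> \<open>ys \<in> ?A\<close> is_walk_set by blast
    ultimately show "xs = ys" using inj inj_on_map_eq_map inj_on_subset by blast
  qed
  ultimately have "card ?A \<le> card ?B" by (intro card_inj_on_le finite_walks[OF fin])
  then show ?thesis by (simp add: walk_count_def)
qed

lemma sum_le_of_subset_doubleton:
  fixes f :: "'a \<Rightarrow> nat"
  assumes "A \<subseteq> {a, b}"
  shows "sum f A \<le> f a + f b"
proof -
  have "sum f A \<le> sum f {a, b}" by (rule sum_mono2) (use assms in auto)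
  also have "\<dots> \<le> f a + f b" by (cases "a = b") auto
  finally show ?thesis .
qed

lemma add_le_sum_of_doubleton_subset:
  fixes f :: "'a \<Rightarrow> nat"
  assumes "finite A" "a \<in> A" "b \<in> A" "a \<noteq> b"
  shows "f a + f b \<le> sum f A"
proof -
  have "f a + f b = sum f {a, b}" using assms(4) by simp
  also have "\<dots> \<le> sum f A" by (rule sum_mono2) (use assms in auto)
  finally show ?thesis .
qed

text \<open>Degree information is needed only on the half of the path near q 0: the neighbours of
q i are mirrored onto neighbours of q (2 * m - i), which may have further neighbours.\<close>

lemma walk_count_reflect_path:
  fixes G :: "'a graph" and q :: "nat \<Rightarrow> 'a" and m :: nat
  assumes fin: "finite (fst G)"
    and q_in: "\<And>i. i \<le> 2 * m \<Longrightarrow> q i \<in> fst G"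
    and q_inj: "inj_on q {0..2 * m}"
    and q_edge: "\<And>i. i < 2 * m \<Longrightarrow> {q i, q (Suc i)} \<in> snd G"
    and nbrs_first: "nbrs G (q 0) \<subseteq> {q 1}"
    and nbrs_inner: "\<And>i. 0 < i \<Longrightarrow> i < m \<Longrightarrow> nbrs G (q i) \<subseteq> {q (i - 1), q (Suc i)}"
    and "i \<le> m"
  shows "walk_count l (q i) G \<le> walk_count l (q (2 * m - i)) G"
  using \<open>i \<le> m\<close>
proof (induction l arbitrary: i)
  case 0
  then show ?case using q_in by (simp add: walk_count_0)
next
  case (Suc l)
  let ?w = "\<lambda>v. walk_count l v G"
  have step: "walk_count (Suc l) (q j) G = sum ?w (nbrs G (q j))" if "j \<le> 2 * m" for j
    using walk_count_Suc[OF fin q_in[OF that]] .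
  have nbr: "q j \<in> nbrs G (q (Suc j))" "q (Suc j) \<in> nbrs G (q j)" if "j < 2 * m" for j
    using q_edge[OF that] q_in that by (auto simp: nbrs_def insert_commute)
  consider "i = m" | "i = 0" "0 < m" | "0 < i" "i < m" using Suc.prems by linarith
  then show ?case
  proof cases
    case 1
    then show ?thesis by simp
  next
    case 2
    have "sum ?w (nbrs G (q 0)) \<le> sum ?w {q 1}"
      by (rule sum_mono2) (use nbrs_first in auto)
    then have "walk_count (Suc l) (q i) G \<le> ?w (q 1)" using step[of 0] \<open>i = 0\<close> by simp
    also have "\<dots> \<le> ?w (q (2 * m - 1))" using Suc.IH[of 1] 2 by simp
    also have "\<dots> \<le> sum ?w (nbrs G (q (2 * m)))"
    proof (rule member_le_sum)
      have "Suc (2 * m - 1) = 2 * m" using 2 by simp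
      then show "q (2 * m - 1) \<in> nbrs G (q (2 * m))" using nbr(1)[of "2 * m - 1"] 2 by simp
    qed (simp_all add: finite_nbrs[OF fin])
    also have "\<dots> = walk_count (Suc l) (q (2 * m - i)) G" using step[of "2 * m"] 2 by simp
    finally show ?thesis .
  next
    case 3
    have "walk_count (Suc l) (q i) G \<le> ?w (q (i - 1)) + ?w (q (Suc i))"
      using step[of i] sum_le_of_subset_doubleton[OF nbrs_inner[OF 3]] 3 by simp
    also have "\<dots> \<le> ?w (q (Suc (2 * m - i))) + ?w (q (2 * m - i - 1))"
    proof (rule add_mono)
      have "2 * m - (i - 1) = Suc (2 * m - i)" using 3 by linarith
      then show "?w (q (i - 1)) \<le> ?w (q (Suc (2 * m - i)))" using Suc.IH[of "i - 1"] 3 by simp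
      have "2 * m - Suc i = 2 * m - i - 1" by linarith
      then show "?w (q (Suc i)) \<le> ?w (q (2 * m - i - 1))" using Suc.IH[of "Suc i"] 3 by simp
    qed
    also have "\<dots> \<le> sum ?w (nbrs G (q (2 * m - i)))"
    proof (rule add_le_sum_of_doubleton_subset[OF finite_nbrs[OF fin]])
      show "q (Suc (2 * m - i)) \<in> nbrs G (q (2 * m - i))" using nbr(2)[of "2 * m - i"] 3 by simp
      have "2 * m - i - 1 < 2 * m" and "Suc (2 * m - i - 1) = 2 * m - i" using 3 by linarith+
      then show "q (2 * m - i - 1) \<in> nbrs G (q (2 * m - i))" using nbr(1) by metis
      show "q (Suc (2 * m - i)) \<noteq> q (2 * m - i - 1)"
      proof
        assume "q (Suc (2 * m - i)) = q (2 * m - i - 1)"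
        then have "Suc (2 * m - i) = 2 * m - i - 1" by (rule inj_onD[OF q_inj]) (use 3 in auto)
        then show False by linarith
      qed
    qed
    also have "\<dots> = walk_count (Suc l) (q (2 * m - i)) G" using step[of "2 * m - i"] by simp
    finally show ?thesis .
  qed
qed

locale pendant_path =
  fixes T :: "'a graph" and p :: "nat \<Rightarrow> 'a" and k :: nat
  assumes tree: "is_tree T"
    and k_pos: "k \<ge> 1"
    and p_inj: "inj_on p {0..k}"
    and p_in: "\<forall>i\<le>k. p i \<in> fst T"
    and p_edge: "\<forall>i<k. {p i, p (Suc i)} \<in> snd T"
    and p_deg: "\<forall>i. 1 \<le> i \<and> i < k \<longrightarrow> card (nbrs T (p i)) = 2"
begin

abbreviation "PE \<equiv> path_edges p k"
abbreviation "H \<equiv> (fst T, snd T - PE)"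
abbreviation "B \<equiv> comp_B T p k"
abbreviation "N \<equiv> nbrs T (p k) - {p (k - 1)}"
abbreviation "V \<equiv> B \<union> path_verts p k"
abbreviation "G \<equiv> induced T V"
abbreviation "G' \<equiv> induced (moved_tree T p k) V"

lemma p_eq_iff: "i \<le> k \<Longrightarrow> j \<le> k \<Longrightarrow> p i = p j \<longleftrightarrow> i = j"
  using p_inj by (auto dest: inj_onD)

lemma finite_T: "finite (fst T)"
  using tree by (simp add: is_tree_def)

lemma edge_T_D: "{x, y} \<in> snd T \<Longrightarrow> x \<in> fst T \<and> y \<in> fst T \<and> x \<noteq> y"
  using tree unfolding is_tree_def wf_graph_def by (metis doubleton_eq_iff)

lemma path_in_T: "i \<le> k \<Longrightarrow> p i \<in> fst T"
  using p_in by blast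

lemma path_edge_in_T: "i < k \<Longrightarrow> {p i, p (Suc i)} \<in> snd T"
  using p_edge by blast

lemma path_edge_in_PE: "i < k \<Longrightarrow> {p i, p (Suc i)} \<in> PE"
  by (auto simp: path_edges_def)

lemma PE_at_path_vertex:
  assumes "i \<le> k" "{p i, y} \<in> PE"
  shows "(0 < i \<and> y = p (i - 1)) \<or> (i < k \<and> y = p (Suc i))"
proof -
  obtain j where j: "j < k" "{p i, y} = {p j, p (Suc j)}"
    using assms(2) by (auto simp: path_edges_def)
  then consider "p i = p j" "y = p (Suc j)" | "p i = p (Suc j)" "y = p j"
    by (auto simp: doubleton_eq_iff)
  then show ?thesis
    by cases (use j assms(1) p_eq_iff[of i j] p_eq_iff[of i "Suc j"] in auto)
qed

lemma nbrs_T_inner: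
  assumes "0 < i" "i < k"
  shows "nbrs T (p i) = {p (i - 1), p (Suc i)}"
proof (rule card_seteq[symmetric])
  show "finite (nbrs T (p i))" using finite_nbrs[OF finite_T] .
  have "{p (i - 1), p i} \<in> snd T" "{p i, p (Suc i)} \<in> snd T"
    using path_edge_in_T[of "i - 1"] path_edge_in_T[of i] assms by simp_all
  then show "{p (i - 1), p (Suc i)} \<subseteq> nbrs T (p i)"
    using path_in_T[of "i - 1"] path_in_T[of "Suc i"] assms by (auto simp: nbrs_def insert_commute)
  have "card {p (i - 1), p (Suc i)} = 2" using p_eq_iff[of "i - 1" "Suc i"] assms by auto
  then show "card (nbrs T (p i)) \<le> card {p (i - 1), p (Suc i)}" using p_deg assms by simp
qed

lemma edge_at_inner_in_PE:
  assumes "0 < i" "i < k" "{p i, w} \<in> snd T"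
  shows "{p i, w} \<in> PE"
proof -
  have "w \<in> nbrs T (p i)" using assms(3) edge_T_D by (auto simp: nbrs_def)
  then consider "w = p (i - 1)" | "w = p (Suc i)" using nbrs_T_inner[OF assms(1,2)] by blast
  then show ?thesis
  proof cases
    case 1
    then show ?thesis using path_edge_in_PE[of "i - 1"] assms(1,2) by (simp add: insert_commute)
  next
    case 2
    then show ?thesis using path_edge_in_PE[of i] assms(2) by simp
  qed
qed

lemma mem_B_iff: "v \<in> B \<longleftrightarrow> (\<exists>ws. is_walk H ws \<and> hd ws = p k \<and> last ws = v)"
  by (simp add: comp_B_def reachable_def)

lemma B_subset: "B \<subseteq> fst T"
  by (auto simp: mem_B_iff) (metis fst_conv last_in_set subsetD is_walk_nonempty is_walk_set)

lemma end_in_B: "p k \<in> B"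
  using path_in_T[of k] by (auto simp: mem_B_iff intro!: exI[of _ "[p k]"])

lemma B_step:
  assumes "x \<in> B" "{x, y} \<in> snd T" "{x, y} \<notin> PE"
  shows "y \<in> B"
proof -
  obtain ws where ws: "is_walk H ws" "hd ws = p k" "last ws = x"
    using assms(1) by (auto simp: mem_B_iff)
  then obtain as where as: "ws = as @ [x]"
    using is_walk_nonempty by (metis append_butlast_last_id)
  have "is_walk H [x, y]" using assms(2,3) edge_T_D by auto
  with ws(1) as have "is_walk H (as @ x # [y])" using is_walk_append_Cons[of H as x "[y]"] by blast
  moreover have "hd (as @ x # [y]) = p k" using ws(2) as by (cases as) auto
  ultimately show ?thesis by (auto simp: mem_B_iff)
qed

lemma B_pred:
  assumes "v \<in> B" "v \<noteq> p k"
  obtains w where "w \<in> B" "{w, v} \<in> snd T"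
proof -
  obtain ws where ws: "is_walk H ws" "hd ws = p k" "last ws = v"
    using assms(1) by (auto simp: mem_B_iff)
  have "2 \<le> length ws" using is_walk_length_ge_2[OF ws(1)] ws(2,3) assms(2) by simp
  then obtain as w where as: "ws = as @ w # [v]"
    using ws(3) by (cases ws rule: rev_cases; cases "butlast ws" rule: rev_cases) auto
  then have "is_walk H (as @ [w])" "is_walk H [w, v]"
    using ws(1) is_walk_append_Cons[of H as w "[v]"] by blast+
  moreover have "hd (as @ [w]) = p k" using ws(2) as by (cases as) auto
  ultimately have "w \<in> B" unfolding mem_B_iff by (intro exI[of _ "as @ [w]"]) simp
  with \<open>is_walk H [w, v]\<close> show ?thesis using that by auto
qed

lemma inner_not_on_long_H_walk:
  assumes "is_walk H ws" "2 \<le> length ws" "0 < i" "i < k"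
  shows "p i \<notin> set ws"
proof
  assume "p i \<in> set ws"
  then obtain w where "{p i, w} \<in> snd T - PE" using is_walk_incident[OF assms(1,2)] by auto
  then show False using edge_at_inner_in_PE[OF assms(3,4)] by blast
qed

lemma inner_not_in_B:
  assumes "0 < i" "i < k"
  shows "p i \<notin> B"
proof
  assume "p i \<in> B"
  then obtain ws where ws: "is_walk H ws" "hd ws = p k" "last ws = p i"
    by (auto simp: mem_B_iff)
  have "p i \<noteq> p k" using p_eq_iff[of i k] assms by simp
  then have "2 \<le> length ws" using is_walk_length_ge_2[OF ws(1)] ws(2,3) by simp
  moreover have "p i \<in> set ws" using ws(3) is_walk_nonempty[OF ws(1)] last_in_set by metis
  ultimately show False using inner_not_on_long_H_walk[OF ws(1) _ assms] by blast
qed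

lemma H_path_to_first_long:
  assumes "is_walk H (as @ [p 0])" "as \<noteq> []" "hd as = p k"
  shows "3 \<le> length as + k"
proof -
  have "2 \<le> k" if "as = [p k]"
  proof (rule ccontr)
    assume "\<not> 2 \<le> k"
    then have "k = 1" using k_pos by simp
    moreover have "{p k, p 0} \<notin> PE" using assms(1) that by simp
    ultimately show False using path_edge_in_PE[of 0] by (simp add: insert_commute)
  qed
  moreover have "as = [p k]" if "length as = 1"
    using that assms(3) by (cases as) auto
  moreover have "1 \<le> length as" using assms(2) by (simp add: Suc_le_eq)
  ultimately show ?thesis using k_pos by (cases "length as = 1") auto
qed

lemma H_path_to_first_closes_cycle:
  assumes walk: "is_walk H (as @ [p 0])" and dist: "distinct (as @ [p 0])"
    and as_ne: "as \<noteq> []" and hd_as: "hd as = p k"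
  shows "has_cycle T"
proof -
  define cs where "cs = as @ map p [0..<k]"
  have path: "map p [0..<k] = p 0 # map p [1..<k]" using k_pos by (simp add: upt_conv_Cons)
  have "is_walk T (as @ [p 0])" using walk by (auto elim: is_walk_mono)
  moreover have "is_walk T (map p [0..<Suc (k - 1)])"
    using path_in_T path_edge_in_T by (intro is_walk_map_upt) auto
  ultimately have "is_walk T cs"
    using is_walk_append_Cons[of T as "p 0" "map p [1..<k]"] k_pos path by (simp add: cs_def)
  moreover have "distinct cs"
  proof -
    have len: "2 \<le> length (as @ [p 0])" using as_ne by (cases as) auto
    have "p i \<notin> set as" if "i < k" for i
    proof (cases "i = 0")
      case True
      then show ?thesis using dist by simp
    next
      case False
      then show ?thesis using inner_not_on_long_H_walk[OF walk len, of i] that by auto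
    qed
    moreover have "distinct (map p [0..<k])"
      using p_inj by (auto simp: distinct_map intro: inj_on_subset)
    ultimately show ?thesis using dist by (auto simp: cs_def)
  qed
  moreover have "{last cs, hd cs} \<in> snd T"
    using path_edge_in_T[of "k - 1"] k_pos hd_as as_ne by (simp add: cs_def last_map insert_commute)
  moreover have "3 \<le> length cs"
    using H_path_to_first_long[OF walk as_ne hd_as] by (simp add: cs_def)
  ultimately show ?thesis unfolding has_cycle_def by blast
qed

lemma first_not_in_B: "p 0 \<notin> B"
proof
  assume "p 0 \<in> B"
  then obtain ws where "is_walk H ws" "hd ws = p k" "last ws = p 0"
    by (auto simp: mem_B_iff)
  then obtain ds where ds: "is_walk H ds" "distinct ds" "hd ds = p k" "last ds = p 0"
    using is_walk_distinct by metis
  have "p k \<noteq> p 0" using p_eq_iff[of k 0] k_pos by simp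
  then have "2 \<le> length ds" using is_walk_length_ge_2[OF ds(1)] ds(3,4) by simp
  moreover obtain as where as: "ds = as @ [p 0]"
    using ds(4) is_walk_nonempty[OF ds(1)] by (metis append_butlast_last_id)
  ultimately have "as \<noteq> []" by auto
  moreover have "hd as = p k" using ds(3) as calculation by simp
  ultimately have "has_cycle T" using H_path_to_first_closes_cycle ds(1,2) as by blast
  then show False using tree by (simp add: is_tree_def)
qed

lemma path_not_in_B: "i < k \<Longrightarrow> p i \<notin> B"
  using inner_not_in_B first_not_in_B by (cases i) auto

lemma edge_end_not_in_PE: "u \<in> N \<Longrightarrow> {p k, u} \<notin> PE"
  using PE_at_path_vertex[of k u] by auto

lemma N_subset_B: "N \<subseteq> B"
  using B_step[OF end_in_B] edge_end_not_in_PE by (auto simp: nbrs_def)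

lemma path_in_V: "i \<le> k \<Longrightarrow> p i \<in> V"
  by (auto simp: path_verts_def)

lemma V_cases:
  assumes "v \<in> V"
  obtains "v \<in> B" | i where "i < k" "v = p i"
  using assms end_in_B by (auto simp: path_verts_def) (metis le_neq_implies_less)

lemma V_subset: "V \<subseteq> fst T"
  using B_subset path_in_T by (auto simp: path_verts_def)

lemma edge_outside_PE_in_B:
  assumes "x \<in> V" "y \<in> V" "{x, y} \<in> snd T" "{x, y} \<notin> PE"
  shows "x \<in> B"
proof (rule ccontr)
  assume "x \<notin> B"
  then obtain i where i: "i < k" "x = p i" using V_cases[OF assms(1)] by blast
  have "y \<notin> B" using B_step[of y x] assms(3,4) \<open>x \<notin> B\<close> by (metis insert_commute)
  then obtain j where j: "j < k" "y = p j" using V_cases[OF assms(2)] by blast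
  have "i \<noteq> j" using edge_T_D[OF assms(3)] i j by auto
  then have "0 < i \<or> 0 < j" by auto
  moreover have "{y, x} \<in> snd T" using assms(3) by (simp add: insert_commute)
  ultimately have "{x, y} \<in> PE \<or> {y, x} \<in> PE"
    using edge_at_inner_in_PE[of i y] edge_at_inner_in_PE[of j x] assms(3) i j by auto
  with assms(4) show False by (auto simp: insert_commute)
qed

lemma fst_G: "fst G = V"
  using V_subset by (auto simp: induced_def)

lemma fst_G': "fst G' = V"
  using V_subset by (auto simp: induced_def moved_tree_def Let_def)

lemma finite_V: "finite V"
  using finite_subset[OF V_subset finite_T] .

lemma edge_G_iff: "{x, y} \<in> snd G \<longleftrightarrow> {x, y} \<in> snd T \<and> x \<in> V \<and> y \<in> V"
  by (simp add: induced_def)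

lemma edge_G'_iff: "{x, y} \<in> snd G' \<longleftrightarrow> {x, y} \<in> snd (moved_tree T p k) \<and> x \<in> V \<and> y \<in> V"
  by (simp add: induced_def)

lemma snd_moved_tree:
  "snd (moved_tree T p k) = (snd T - (\<lambda>u. {p k, u}) ` N) \<union> (\<lambda>u. {p 0, u}) ` N"
  by (simp add: moved_tree_def Let_def)

lemma nbrs_G: "nbrs G v = {u \<in> V. v \<in> V \<and> {v, u} \<in> snd T}"
  by (auto simp: nbrs_def fst_G edge_G_iff)

lemma path_edge_in_G: "i < k \<Longrightarrow> {p i, p (Suc i)} \<in> snd G"
  using path_edge_in_T path_in_V by (simp add: edge_G_iff)

lemma nbrs_G_first: "nbrs G (p 0) \<subseteq> {p 1}"
proof
  fix y assume "y \<in> nbrs G (p 0)"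
  then have y: "y \<in> V" "{p 0, y} \<in> snd T" by (auto simp: nbrs_G)
  have "{p 0, y} \<in> PE"
    using edge_outside_PE_in_B[OF path_in_V y] first_not_in_B by blast
  then show "y \<in> {p 1}" using PE_at_path_vertex[of 0 y] by simp
qed

lemma nbrs_G_subset: "nbrs G v \<subseteq> nbrs T v"
  unfolding nbrs_G using V_subset by (auto simp: nbrs_def)

lemma nbrs_G_inner: "0 < i \<Longrightarrow> i < k \<Longrightarrow> nbrs G (p i) \<subseteq> {p (i - 1), p (Suc i)}"
  using nbrs_G_subset nbrs_T_inner by blast

lemma G_no_isolated:
  assumes "v \<in> fst G"
  shows "nbrs G v \<noteq> {}"
proof -
  have v: "v \<in> V" using assms fst_G by simp
  consider "v \<in> B" "v \<noteq> p k" | "v = p k" | i where "i < k" "v = p i"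
    using V_cases[OF v] by metis
  then show ?thesis
  proof cases
    case 1
    then obtain w where "w \<in> B" "{w, v} \<in> snd T" using B_pred by blast
    then have "w \<in> nbrs G v" using v by (auto simp: nbrs_G insert_commute)
    then show ?thesis by blast
  next
    case 2
    have "{p k, p (k - 1)} \<in> snd T" using path_edge_in_T[of "k - 1"] k_pos by (simp add: insert_commute)
    then have "p (k - 1) \<in> nbrs G v" using 2 path_in_V[of k] path_in_V[of "k - 1"] by (simp add: nbrs_G)
    then show ?thesis by blast
  next
    case 3
    then have "p (Suc i) \<in> nbrs G v" using path_edge_in_T path_in_V by (simp add: nbrs_G)
    then show ?thesis by blast
  qed
qed

lemma walk_count_first_le_last_even:
  assumes "even k"
  shows "walk_count l (p 0) G \<le> walk_count l (p k) G"
proof -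
  obtain m where m: "k = 2 * m" using assms by blast
  have "walk_count l (p 0) G \<le> walk_count l (p (2 * m - 0)) G"
  proof (rule walk_count_reflect_path)
    show "nbrs G (p i) \<subseteq> {p (i - 1), p (Suc i)}" if "0 < i" "i < m" for i
      using nbrs_G_inner that m by simp
  qed (use finite_V fst_G path_in_V p_inj path_edge_in_G nbrs_G_first m in auto)
  then show ?thesis using m by simp
qed

lemma walk_count_second_le_last_odd:
  assumes "odd k" "u \<in> N"
  shows "walk_count l (p 1) G \<le> walk_count l (p k) G"
proof -
  obtain m where m: "k = 2 * m + 1" using assms(1) oddE by blast
  \<comment> \<open>prolong the path by u to even length\<close>
  define q where "q = p(Suc k := u)"
  have q_p: "q i = p i" if "i \<le> k" for i using that by (simp add: q_def)
  have u_V: "u \<in> V" using assms(2) N_subset_B by blast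
  have u_edge: "{p k, u} \<in> snd T" using assms(2) by (simp add: nbrs_def)
  have u_not_path: "u \<notin> p ` {0..k}"
  proof
    assume "u \<in> p ` {0..k}"
    then obtain i where "i \<le> k" "u = p i" by auto
    moreover have "u \<noteq> p k" using edge_T_D[OF u_edge] by blast
    ultimately show False using path_not_in_B[of i] assms(2) N_subset_B by (auto simp: le_less)
  qed
  have "walk_count l (q 1) G \<le> walk_count l (q (2 * (m + 1) - 1)) G"
  proof (rule walk_count_reflect_path)
    show "q i \<in> fst G" if "i \<le> 2 * (m + 1)" for i
      using that path_in_V u_V m fst_G by (cases "i = Suc k") (auto simp: q_def)
    have "{0..2 * (m + 1)} = insert (Suc k) {0..k}" using m by auto
    moreover have "inj_on q {0..k}" using p_inj inj_on_cong[of "{0..k}" q p] q_p by simp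
    ultimately show "inj_on q {0..2 * (m + 1)}" using u_not_path q_p by (simp add: q_def)
    show "{q i, q (Suc i)} \<in> snd G" if "i < 2 * (m + 1)" for i
    proof (cases "i = k")
      case True
      then show ?thesis using u_edge u_V path_in_V[of k] by (simp add: q_def edge_G_iff)
    next
      case False
      then show ?thesis using that m path_edge_in_G[of i] by (simp add: q_def)
    qed
    show "nbrs G (q 0) \<subseteq> {q 1}" using nbrs_G_first k_pos by (simp add: q_def)
    show "nbrs G (q i) \<subseteq> {q (i - 1), q (Suc i)}" if "0 < i" "i < m + 1" for i
      using nbrs_G_inner[of i] that m q_p[of i] q_p[of "i - 1"] q_p[of "Suc i"] by simp
  qed (use finite_V fst_G m in auto)
  then show ?thesis using m k_pos by (simp add: q_def)
qed

lemma walk_count_Suc_first_le_second: "walk_count (Suc l) (p 0) G \<le> walk_count l (p 1) G"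
proof -
  have "sum (\<lambda>v. walk_count l v G) (nbrs G (p 0)) \<le> sum (\<lambda>v. walk_count l v G) {p 1}"
    by (rule sum_mono2) (use nbrs_G_first in auto)
  then show ?thesis using walk_count_Suc[of G "p 0" l] finite_V fst_G path_in_V[of 0] by simp
qed

lemma walk_count_first_le_last:
  assumes "1 \<le> l" and "even k \<or> N \<noteq> {}"
  shows "walk_count l (p 0) G \<le> walk_count l (p k) G"
proof (cases "even k")
  case False
  then obtain u where u: "u \<in> N" using assms(2) by blast
  obtain l' where l': "l = Suc l'" using assms(1) by (cases l) auto
  have "walk_count l (p 0) G \<le> walk_count l' (p 1) G"
    unfolding l' by (rule walk_count_Suc_first_le_second)
  also have "\<dots> \<le> walk_count l' (p k) G" using walk_count_second_le_last_odd[OF False u] .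
  also have "\<dots> \<le> walk_count l (p k) G"
    unfolding l' using walk_count_le_Suc G_no_isolated finite_V fst_G by metis
  finally show ?thesis .
qed (rule walk_count_first_le_last_even)

definition flip :: "'a \<Rightarrow> 'a" where
  "flip v = (if v \<in> p ` {0..k} then p (k - inv_into {0..k} p v) else v)"

lemma flip_path: "i \<le> k \<Longrightarrow> flip (p i) = p (k - i)"
  unfolding flip_def using inv_into_f_f[OF p_inj, of i] by simp

lemma flip_outside: "v \<notin> p ` {0..k} \<Longrightarrow> flip v = v"
  unfolding flip_def by simp

lemma flip_flip: "flip (flip v) = v"
proof (cases "v \<in> p ` {0..k}")
  case True
  then obtain i where "i \<le> k" "v = p i" by auto
  then show ?thesis by (simp add: flip_path)
qed (simp add: flip_outside)

lemma flip_in_V: "v \<in> V \<Longrightarrow> flip v \<in> V"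
proof (cases "v \<in> p ` {0..k}")
  case True
  then obtain i where "i \<le> k" "v = p i" by auto
  then show ?thesis using path_in_V[of "k - i"] by (simp add: flip_path)
qed (simp add: flip_outside)

lemma flip_B: "v \<in> B \<Longrightarrow> v \<noteq> p k \<Longrightarrow> flip v = v"
  using path_not_in_B by (auto intro!: flip_outside simp: le_less)

lemma flip_B_edge:
  assumes "x \<in> B" "y \<in> B" "{x, y} \<in> snd T" "x \<noteq> p k"
  shows "{flip x, flip y} \<in> snd (moved_tree T p k)"
proof (cases "y = p k")
  case True
  have "p (k - 1) \<notin> B" using path_not_in_B[of "k - 1"] k_pos by simp
  then have "x \<in> N" using assms(1,3) True edge_T_D[OF assms(3)] by (auto simp: nbrs_def insert_commute)
  moreover have "{flip x, flip y} = {p 0, x}"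
    using True flip_path[of k] flip_B[OF assms(1,4)] by (simp add: insert_commute)
  ultimately show ?thesis by (simp add: snd_moved_tree)
next
  case False
  then have "{x, y} \<notin> (\<lambda>u. {p k, u}) ` N" using assms(4) by (auto simp: doubleton_eq_iff)
  then show ?thesis
    using assms(3) flip_B[OF assms(1,4)] flip_B[OF assms(2) False] by (simp add: snd_moved_tree)
qed

lemma flip_edge:
  assumes "x \<in> V" "y \<in> V" "{x, y} \<in> snd T"
  shows "{flip x, flip y} \<in> snd (moved_tree T p k)"
proof (cases "{x, y} \<in> PE")
  case True
  then obtain j where j: "j < k" "{x, y} = {p j, p (Suc j)}" by (auto simp: path_edges_def)
  let ?j = "k - Suc j"
  have "{flip x, flip y} = {p ?j, p (Suc ?j)}"
    using j flip_path[of j] flip_path[of "Suc j"] by (auto simp: doubleton_eq_iff Suc_diff_Suc)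
  moreover have "?j < k" using j(1) by simp
  ultimately have flipped: "{flip x, flip y} \<in> snd T \<inter> PE"
    using path_edge_in_T path_edge_in_PE by simp
  moreover have "{flip x, flip y} \<notin> (\<lambda>u. {p k, u}) ` N"
  proof
    assume "{flip x, flip y} \<in> (\<lambda>u. {p k, u}) ` N"
    then obtain u where "u \<in> N" "{flip x, flip y} = {p k, u}" by blast
    then show False using flipped edge_end_not_in_PE[OF \<open>u \<in> N\<close>] by simp
  qed
  ultimately show ?thesis by (simp add: snd_moved_tree)
next
  case False
  have "{y, x} \<in> snd T" "{y, x} \<notin> PE" using assms(3) False by (simp_all add: insert_commute)
  then have B: "x \<in> B" "y \<in> B"
    using edge_outside_PE_in_B assms False by blast+
  show ?thesis
  proof (cases "x = p k")
    case True
    then have "y \<noteq> p k" using edge_T_D[OF assms(3)] by blast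
    then show ?thesis using flip_B_edge[OF B(2,1) \<open>{y, x} \<in> snd T\<close>] by (simp add: insert_commute)
  qed (use flip_B_edge[OF B assms(3)] in simp)
qed

lemma walk_count_last_le_moved_first: "walk_count l (p k) G \<le> walk_count l (p 0) G'"
proof -
  have "walk_count l (p k) G \<le> walk_count l (flip (p k)) G'"
  proof (rule walk_count_le_inj_hom)
    show "inj_on flip (fst G)" using flip_flip by (intro inj_on_inverseI)
    show "{flip x, flip y} \<in> snd G'" if "x \<in> fst G" "y \<in> fst G" "{x, y} \<in> snd G" for x y
      using that flip_edge flip_in_V by (simp add: fst_G edge_G_iff edge_G'_iff)
  qed (use finite_V fst_G fst_G' flip_in_V in auto)
  then show ?thesis using flip_path[of k] by simp
qed

lemma moved_tree_trivial:
  assumes "N = {}"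
  shows "moved_tree T p k = T"
  unfolding moved_tree_def Let_def assms by simp

lemma walk_count_le_moved: "1 \<le> l \<Longrightarrow> walk_count l (p 0) G \<le> walk_count l (p 0) G'"
  using walk_count_first_le_last walk_count_last_le_moved_first moved_tree_trivial
  by (cases "N = {}") (auto intro: le_trans)

end

theorem corollary5:
  fixes T :: "'a graph" and p :: "nat \<Rightarrow> 'a" and k l :: nat
  assumes "is_tree T"
    and "k \<ge> 1"
    and "inj_on p {0..k}"
    and "\<forall>i\<le>k. p i \<in> fst T"
    and "\<forall>i<k. {p i, p (Suc i)} \<in> snd T"
    and "\<forall>i. 1 \<le> i \<and> i < k \<longrightarrow> card (nbrs T (p i)) = 2"
    and "l \<ge> 1"
  shows "int (walk_count l (p 0) (induced T (comp_B T p k \<union> path_verts p k)))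
           - int (walk_count l (p 0) (path_graph p k))
         \<le> int (walk_count l (p 0) (induced (moved_tree T p k) (comp_B T p k \<union> path_verts p k)))
           - int (walk_count l (p 0) (path_graph p k))"
proof -
  interpret pendant_path T p k
    using assms(1-6) by unfold_locales
  show ?thesis using walk_count_le_moved[OF assms(7)] by simp
qed

end
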